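(* Let $|\Psi^{\mathrm h}_0\rangle$ and $|\Psi^{\mathrm c}_0\rangle$ be two initial states with $p^{\mathrm h}_0(0)>0$ and $p^{\mathrm c}_0(0)>0$, and suppose $|\Psi^{\mathrm h}_0\rangle$ is hotter than $|\Psi^{\mathrm c}_0\rangle$ with respect to $D_f$, i.e. $D_f^{\mathrm h}(0)>D_f^{\mathrm c}(0)$. Let $i\in\{1,\dots,n-1\}$ be the smallest index such that $\frac{p^{\mathrm h}_i(0)}{p^{\mathrm h}_0(0)}\neq\frac{p^{\mathrm c}_i(0)}{p^{\mathrm c}_0(0)}$ (such an index exists under the hypotheses). Then the Mpemba effect occurs for this pair (with respect to $D_f$) if and only if $$\frac{p^{\mathrm h}_i(0)}{p^{\mathrm h}_0(0)}<\frac{p^{\mathrm c}_i(0)}{p^{\mathrm c}_0(0)}.$$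
   Context: Let $H$ be a Hamiltonian on an $n$-dimensional Hilbert space with nondegenerate eigenvalues $0=E_0<E_1<\dots<E_{n-1}$ and orthonormal eigenvectors $|E_0\rangle,\dots,|E_{n-1}\rangle$. For a pure initial state $|\Psi_0\rangle$ and real $\tau$, quantum imaginary-time evolution (QITE) is $|\Psi(\tau)\rangle=e^{-H\tau}|\Psi_0\rangle/\sqrt{\langle\Psi_0|e^{-2H\tau}|\Psi_0\rangle}$. The populations are $p_i(\tau)=|\langle E_i|\Psi(\tau)\rangle|^2$, so that $p_i(\tau)=p_i(0)e^{-2E_i\tau}/\sum_{j=0}^{n-1}p_j(0)e^{-2E_j\tau}$. Fix a nondecreasing function $f:\mathbb R\to\mathbb R$ with $f(E_1)>f(E_0)=0$, and define the distance to the ground state $D_f(\tau)=\sum_{i=0}^{n-1}p_i(\tau)f(E_i)$. Superscripts $\mathrm h$ and $\mathrm c$ denote quantities for the QITE trajectories starting from $|\Psi^{\mathrm h}_0\rangle$ and $|\Psi^{\mathrm c}_0\rangle$ respectively. Given $D_f^{\mathrm h}(0)>D_f^{\mathrm c}(0)$, the Mpemba effect occurs if there exists $\tau^\star>0$ such that $D_f^{\mathrm h}(\tau)<D_f^{\mathrm c}(\tau)$ for all $\tau>\tau^\star$. *)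

theory Defs
  imports Complex_Main
begin

text \<open>A pure state is represented by its coordinates (amplitudes) in the orthonormal
  eigenbasis of H: psi i = <E_i|Psi_0>, for i < n.  The Hamiltonian is diagonal in this
  basis with eigenvalues E 0 < E 1 < ... < E (n-1).\<close>

definition qite_norm :: "nat \<Rightarrow> (nat \<Rightarrow> real) \<Rightarrow> (nat \<Rightarrow> complex) \<Rightarrow> real \<Rightarrow> real" where
  "qite_norm n E psi \<tau> = sqrt (\<Sum>j<n. exp (-2 * E j * \<tau>) * (cmod (psi j))\<^sup>2)"

text \<open>Amplitudes of the QITE state e^{-H tau}|Psi_0> / sqrt(<Psi_0|e^{-2 H tau}|Psi_0>).\<close>
definition qite :: "nat \<Rightarrow> (nat \<Rightarrow> real) \<Rightarrow> (nat \<Rightarrow> complex) \<Rightarrow> real \<Rightarrow> nat \<Rightarrow> complex" where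
  "qite n E psi \<tau> i = complex_of_real (exp (- E i * \<tau>) / qite_norm n E psi \<tau>) * psi i"

definition pop :: "nat \<Rightarrow> (nat \<Rightarrow> real) \<Rightarrow> (nat \<Rightarrow> complex) \<Rightarrow> real \<Rightarrow> nat \<Rightarrow> real" where
  "pop n E psi \<tau> i = (cmod (qite n E psi \<tau> i))\<^sup>2"

definition Dist :: "nat \<Rightarrow> (nat \<Rightarrow> real) \<Rightarrow> (real \<Rightarrow> real) \<Rightarrow> (nat \<Rightarrow> complex) \<Rightarrow> real \<Rightarrow> real" where
  "Dist n E f psi \<tau> = (\<Sum>i<n. pop n E psi \<tau> i * f (E i))"

definition mpemba :: "nat \<Rightarrow> (nat \<Rightarrow> real) \<Rightarrow> (real \<Rightarrow> real) \<Rightarrow> (nat \<Rightarrow> complex) \<Rightarrow> (nat \<Rightarrow> complex) \<Rightarrow> bool" where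
  "mpemba n E f psih psic \<longleftrightarrow>
     (\<exists>\<tau>s>0. \<forall>\<tau>>\<tau>s. Dist n E f psih \<tau> < Dist n E f psic \<tau>)"

end

theory Submission
  imports Defs
begin

(* With a_i = |<E_i|Psi_0>|^2 the initial populations, D^c_f(t) - D^h_f(t) has the sign of
     sum_{i,j} f(E_i) (a^c_i a^h_j - a^h_i a^c_j) exp(-2 (E_i + E_j) t).
   Terms with i = 0 vanish since f(E_0) = 0, and terms with i, j < k vanish since the two
   population vectors are proportional below the first index k at which the ratios a_i / a_0
   differ.  All remaining terms except (k, 0) decay strictly faster than exp(-2 E_k t), so for
   large t the sign is that of f(E_k) (a^c_k a^h_0 - a^h_k a^c_0), i.e. of the comparison of
   the ratios at k. *)

lemma exp_sum_tendsto_leading_coeff: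
  fixes c r :: "'a \<Rightarrow> real"
  assumes "finite I" "i0 \<in> I" "r i0 = 0"
    and decay: "\<And>i. i \<in> I \<Longrightarrow> i \<noteq> i0 \<Longrightarrow> c i \<noteq> 0 \<Longrightarrow> r i > 0"
  shows "((\<lambda>t. \<Sum>i\<in>I. c i * exp (- r i * t)) \<longlongrightarrow> c i0) at_top"
proof -
  have term_limit: "((\<lambda>t. c i * exp (- r i * t)) \<longlongrightarrow> (if i = i0 then c i0 else 0)) at_top"
    if "i \<in> I" for i
  proof (cases "i = i0 \<or> c i = 0")
    case True
    then show ?thesis using assms(3) by auto
  next
    case False
    then have "r i > 0" using decay that by blast
    then have "filterlim (\<lambda>t. - r i * t) at_bot at_top"
      by (intro filterlim_tendsto_neg_mult_at_bot[OF tendsto_const _ filterlim_ident]) simp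
    then have "((\<lambda>t. exp (- r i * t)) \<longlongrightarrow> 0) at_top"
      by (rule filterlim_compose[OF exp_at_bot])
    then show ?thesis using False tendsto_mult_right_zero by auto
  qed
  have "((\<lambda>t. \<Sum>i\<in>I. c i * exp (- r i * t)) \<longlongrightarrow> (\<Sum>i\<in>I. if i = i0 then c i0 else 0)) at_top"
    by (intro tendsto_sum term_limit)
  then show ?thesis using assms(1,2) by simp
qed

lemma eventually_pos_iff_limit_pos:
  fixes g :: "'a \<Rightarrow> real"
  assumes "(g \<longlongrightarrow> C) F" "F \<noteq> bot" "C \<noteq> 0"
  shows "eventually (\<lambda>x. 0 < g x) F \<longleftrightarrow> 0 < C"
proof
  assume pos: "eventually (\<lambda>x. 0 < g x) F"
  show "0 < C"
  proof (rule ccontr)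
    assume "\<not> 0 < C"
    then have "eventually (\<lambda>x. g x < 0) F"
      using assms(1,3) by (intro order_tendstoD(2)) auto
    with pos have "eventually (\<lambda>x. False) F"
      by eventually_elim simp
    with assms(2) show False by simp
  qed
qed (use assms(1) order_tendstoD(1) in blast)

lemma weighted_mean_less_iff:
  fixes u v x :: "'a \<Rightarrow> real"
  assumes "sum u A > 0" "sum v A > 0"
  shows "(\<Sum>i\<in>A. u i * x i) / sum u A < (\<Sum>i\<in>A. v i * x i) / sum v A
     \<longleftrightarrow> 0 < (\<Sum>(i, j)\<in>A \<times> A. x i * (v i * u j - u i * v j))"
proof -
  have "(\<Sum>(i, j)\<in>A \<times> A. x i * (v i * u j - u i * v j))
      = (\<Sum>i\<in>A. \<Sum>j\<in>A. v i * x i * u j) - (\<Sum>i\<in>A. \<Sum>j\<in>A. u i * x i * v j)"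
    by (simp add: sum.cartesian_product[symmetric] sum_subtractf[symmetric] algebra_simps)
  also have "\<dots> = (\<Sum>i\<in>A. v i * x i) * sum u A - (\<Sum>i\<in>A. u i * x i) * sum v A"
    by (simp add: sum_product)
  finally show ?thesis using assms by (simp add: divide_simps)
qed

lemma proportional_sum_one_eq:
  fixes u v :: "'a \<Rightarrow> real"
  assumes "sum u A = 1" "sum v A = 1" "\<And>i. i \<in> A \<Longrightarrow> v i = \<rho> * u i" "i \<in> A"
  shows "v i = u i"
proof -
  have "sum v A = \<rho> * sum u A" by (simp add: assms(3) sum_distrib_left)
  then have "\<rho> = 1" using assms(1,2) by simp
  then show ?thesis using assms(3,4) by simp
qed

lemma ex_ratio_ne_if_mean_ne:
  fixes u v x :: "nat \<Rightarrow> real"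
  assumes "sum u {..<n} = 1" "sum v {..<n} = 1" "u 0 \<noteq> 0" "v 0 \<noteq> 0"
    and "(\<Sum>i<n. u i * x i) \<noteq> (\<Sum>i<n. v i * x i)"
  shows "\<exists>i. 1 \<le> i \<and> i < n \<and> u i / u 0 \<noteq> v i / v 0"
proof (rule ccontr)
  assume "\<nexists>i. 1 \<le> i \<and> i < n \<and> u i / u 0 \<noteq> v i / v 0"
  then have "u i / u 0 = v i / v 0" if "i < n" for i
    using that assms(3,4) by (cases "i = 0") auto
  then have "v i = v 0 / u 0 * u i" if "i < n" for i
    using that assms(3,4) by (simp add: divide_simps mult.commute)
  then have "v i = u i" if "i < n" for i
    using proportional_sum_one_eq[OF assms(1,2)] that by blast
  then show False using assms(5) by simp
qed

lemma pop_formula: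
  "pop n E psi t i = exp (-2 * E i * t) * (cmod (psi i))\<^sup>2 / (\<Sum>j<n. exp (-2 * E j * t) * (cmod (psi j))\<^sup>2)"
proof -
  have "(exp (- E i * t))\<^sup>2 = exp (-2 * E i * t)"
    by (simp add: power2_eq_square exp_add[symmetric])
  moreover have "(\<Sum>j<n. exp (-2 * E j * t) * (cmod (psi j))\<^sup>2) \<ge> 0"
    by (intro sum_nonneg) simp
  ultimately show ?thesis
    by (simp add: pop_def qite_def qite_norm_def norm_mult norm_divide power_mult_distrib
        power_divide)
qed

lemma pop_at_0:
  assumes "(\<Sum>j<n. (cmod (psi j))\<^sup>2) = 1"
  shows "pop n E psi 0 i = (cmod (psi i))\<^sup>2"
  using assms by (simp add: pop_formula)

lemma Dist_at_0:
  assumes "(\<Sum>j<n. (cmod (psi j))\<^sup>2) = 1"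
  shows "Dist n E f psi 0 = (\<Sum>i<n. (cmod (psi i))\<^sup>2 * f (E i))"
  using assms by (simp add: Dist_def pop_at_0)

lemma partition_sum_pos:
  fixes n :: nat
  assumes "0 < n" "psi 0 \<noteq> 0"
  shows "0 < (\<Sum>j<n. exp (-2 * E j * t) * (cmod (psi j))\<^sup>2)"
proof -
  have "0 < exp (-2 * E 0 * t) * (cmod (psi 0))\<^sup>2" using assms(2) by simp
  also have "\<dots> \<le> (\<Sum>j<n. exp (-2 * E j * t) * (cmod (psi j))\<^sup>2)"
    using assms(1) by (intro member_le_sum) simp_all
  finally show ?thesis .
qed

(* For u = a^h, v = a^c this is exp(2 s t) Z^h(t) Z^c(t) (D^c_f(t) - D^h_f(t)), with Z the
   normalising sums. *)
definition cross_sum :: "nat \<Rightarrow> (nat \<Rightarrow> real) \<Rightarrow> (real \<Rightarrow> real) \<Rightarrow>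
    (nat \<Rightarrow> real) \<Rightarrow> (nat \<Rightarrow> real) \<Rightarrow> real \<Rightarrow> real \<Rightarrow> real"
  where "cross_sum n E f u v s t =
    (\<Sum>(i, j)\<in>{..<n} \<times> {..<n}. f (E i) * (v i * u j - u i * v j) * exp (-2 * (E i + E j - s) * t))"

lemma Dist_less_iff_cross_sum_pos:
  assumes "0 < n" "psih 0 \<noteq> 0" "psic 0 \<noteq> 0"
  shows "Dist n E f psih t < Dist n E f psic t
     \<longleftrightarrow> 0 < cross_sum n E f (\<lambda>i. (cmod (psih i))\<^sup>2) (\<lambda>i. (cmod (psic i))\<^sup>2) s t"
proof -
  define w where "w psi i = exp (-2 * E i * t) * (cmod (psi i))\<^sup>2" for psi i
  have Dist_mean: "Dist n E f psi t = (\<Sum>i<n. w psi i * f (E i)) / sum (w psi) {..<n}" for psi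
    by (simp add: Dist_def pop_formula w_def sum_divide_distrib)
  have "(\<Sum>(i, j)\<in>{..<n} \<times> {..<n}. f (E i) * (w psic i * w psih j - w psih i * w psic j))
      = exp (-2 * s * t) * cross_sum n E f (\<lambda>i. (cmod (psih i))\<^sup>2) (\<lambda>i. (cmod (psic i))\<^sup>2) s t"
    unfolding cross_sum_def sum_distrib_left
    by (intro sum.cong refl) (auto simp: w_def algebra_simps simp flip: exp_add)
  moreover have "sum (w psi) {..<n} > 0" if "psi 0 \<noteq> 0" for psi
    using partition_sum_pos[of n psi E t] assms(1) that by (simp add: w_def)
  ultimately show ?thesis
    using assms by (simp add: Dist_mean weighted_mean_less_iff zero_less_mult_iff)
qed

lemma cross_sum_tendsto_leading_coeff:
  fixes u v :: "nat \<Rightarrow> real"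
  assumes E0: "E 0 = 0" and E_mono: "\<And>i j. i < j \<Longrightarrow> j < n \<Longrightarrow> E i < E j"
    and f0: "f (E 0) = 0" and k: "0 < k" "k < n"
    and proportional: "\<And>i. i < k \<Longrightarrow> v i = \<rho> * u i"
  shows "(cross_sum n E f u v (E k) \<longlongrightarrow> f (E k) * (v k * u 0 - u k * v 0)) at_top"
proof -
  define c where "c = (\<lambda>(i, j). f (E i) * (v i * u j - u i * v j))"
  define r where "r = (\<lambda>(i, j). 2 * (E i + E j - E k))"
  have E_pos: "0 < E i" if "0 < i" "i < n" for i
    using E_mono[OF that] E0 by simp
  have E_nonneg: "0 \<le> E i" if "i < n" for i
    using E_pos[of i] that E0 by (cases "i = 0") auto
  have decay: "0 < r p"
    if mem: "p \<in> {..<n} \<times> {..<n}" and not_leading: "p \<noteq> (k, 0)" and nonzero: "c p \<noteq> 0" for p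
  proof -
    obtain i j where p: "p = (i, j)" "i < n" "j < n" using mem by auto
    have "0 < i" using nonzero f0 by (cases i) (auto simp: p c_def)
    moreover have "k \<le> i \<or> k \<le> j"
    proof (rule ccontr)
      assume "\<not> (k \<le> i \<or> k \<le> j)"
      then have "c p = 0" using proportional[of i] proportional[of j] by (simp add: p c_def)
      with nonzero show False by contradiction
    qed
    ultimately have "E k < E i + E j"
      using p not_leading E_mono[of k i] E_mono[of k j] E_pos[of i] E_pos[of j] E_nonneg[of j]
      by (cases i k rule: linorder_cases) (auto simp: le_less)
    then show ?thesis by (simp add: p r_def)
  qed
  have "cross_sum n E f u v (E k) = (\<lambda>t. \<Sum>p\<in>{..<n} \<times> {..<n}. c p * exp (- r p * t))"
    by (auto simp: fun_eq_iff cross_sum_def c_def r_def algebra_simps intro!: sum.cong)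
  moreover have "((\<lambda>t. \<Sum>p\<in>{..<n} \<times> {..<n}. c p * exp (- r p * t)) \<longlongrightarrow> c (k, 0)) at_top"
    using k decay E0 by (intro exp_sum_tendsto_leading_coeff) (simp_all add: r_def)
  ultimately show ?thesis by (simp add: c_def)
qed

lemma eventually_cross_sum_pos_iff:
  fixes u v :: "nat \<Rightarrow> real"
  assumes E0: "E 0 = 0" and E_mono: "\<And>i j. i < j \<Longrightarrow> j < n \<Longrightarrow> E i < E j"
    and f_mono: "mono f" and f0: "f (E 0) = 0" and f1: "f (E 0) < f (E 1)"
    and k: "0 < k" "k < n"
    and u0: "0 < u 0" and v0: "0 < v 0"
    and same_below: "\<And>i. i < k \<Longrightarrow> u i / u 0 = v i / v 0"
    and differs: "u k / u 0 \<noteq> v k / v 0"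
  shows "eventually (\<lambda>t. 0 < cross_sum n E f u v (E k) t) at_top \<longleftrightarrow> u k / u 0 < v k / v 0"
proof -
  have "v i = v 0 / u 0 * u i" if "i < k" for i
    using same_below[OF that] u0 v0 by (simp add: divide_simps mult.commute)
  then have lim: "(cross_sum n E f u v (E k) \<longlongrightarrow> f (E k) * (v k * u 0 - u k * v 0)) at_top"
    using E0 E_mono f0 k by (intro cross_sum_tendsto_leading_coeff)
  have "f (E 1) \<le> f (E k)"
    using f_mono E_mono[of 1 k] k by (cases "k = 1") (auto intro: monoD)
  then have "0 < f (E k)" using f0 f1 by simp
  then have "0 < f (E k) * (v k * u 0 - u k * v 0) \<longleftrightarrow> u k / u 0 < v k / v 0"
    and "f (E k) * (v k * u 0 - u k * v 0) \<noteq> 0"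
    using differs u0 v0 by (auto simp: zero_less_mult_iff divide_simps)
  with eventually_pos_iff_limit_pos[OF lim] show ?thesis by simp
qed

lemma mpemba_iff_eventually:
  "mpemba n E f psih psic \<longleftrightarrow> eventually (\<lambda>t. Dist n E f psih t < Dist n E f psic t) at_top"
  unfolding mpemba_def eventually_at_top_dense
proof
  assume "\<exists>N. \<forall>t>N. Dist n E f psih t < Dist n E f psic t"
  then obtain N where "\<forall>t>N. Dist n E f psih t < Dist n E f psic t" by blast
  then show "\<exists>\<tau>s>0. \<forall>\<tau>>\<tau>s. Dist n E f psih \<tau> < Dist n E f psic \<tau>"
    by (intro exI[of _ "max N 1"]) auto
qed blast

theorem theorem1:
  fixes n :: nat and E :: "nat \<Rightarrow> real" and f :: "real \<Rightarrow> real"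
    and psih psic :: "nat \<Rightarrow> complex"
  assumes n2: "n \<ge> 2"
    and E0: "E 0 = 0"
    and Emono: "\<And>i j. i < j \<Longrightarrow> j < n \<Longrightarrow> E i < E j"
    and fmono: "mono f"
    and f0: "f (E 0) = 0"
    and f1: "f (E 1) > f (E 0)"
    and normh: "(\<Sum>i<n. (cmod (psih i))\<^sup>2) = 1"
    and normc: "(\<Sum>i<n. (cmod (psic i))\<^sup>2) = 1"
    and ph0: "pop n E psih 0 0 > 0"
    and pc0: "pop n E psic 0 0 > 0"
    and hotter: "Dist n E f psih 0 > Dist n E f psic 0"
  shows "(\<exists>i. 1 \<le> i \<and> i < n \<and>
            pop n E psih 0 i / pop n E psih 0 0 \<noteq> pop n E psic 0 i / pop n E psic 0 0)
       \<and> (mpemba n E f psih psic \<longleftrightarrow>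
            (let i = (LEAST i. 1 \<le> i \<and> i < n \<and>
                        pop n E psih 0 i / pop n E psih 0 0 \<noteq> pop n E psic 0 i / pop n E psic 0 0)
             in pop n E psih 0 i / pop n E psih 0 0 < pop n E psic 0 i / pop n E psic 0 0))"
proof -
  define ah where "ah i = (cmod (psih i))\<^sup>2" for i
  define ac where "ac i = (cmod (psic i))\<^sup>2" for i
  have pop_h: "pop n E psih 0 = ah" and pop_c: "pop n E psic 0 = ac"
    using normh normc by (auto simp: fun_eq_iff pop_at_0 ah_def ac_def)
  have ah0: "0 < ah 0" and ac0: "0 < ac 0" using ph0 pc0 by (simp_all add: pop_h pop_c)
  have ex: "\<exists>i. 1 \<le> i \<and> i < n \<and> ah i / ah 0 \<noteq> ac i / ac 0"
    using hotter normh normc ah0 ac0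
    by (intro ex_ratio_ne_if_mean_ne[of ah n ac "\<lambda>i. f (E i)"]) (auto simp: Dist_at_0 ah_def ac_def)
  define k where "k = (LEAST i. 1 \<le> i \<and> i < n \<and> ah i / ah 0 \<noteq> ac i / ac 0)"
  have k: "0 < k" "k < n" "ah k / ah 0 \<noteq> ac k / ac 0"
    using LeastI_ex[OF ex] unfolding k_def by auto
  have same_below: "ah i / ah 0 = ac i / ac 0" if "i < k" for i
    using not_less_Least[of i "\<lambda>i. 1 \<le> i \<and> i < n \<and> ah i / ah 0 \<noteq> ac i / ac 0", folded k_def]
      that k ah0 ac0
    by (cases "i = 0") auto
  have "Dist n E f psih t < Dist n E f psic t \<longleftrightarrow> 0 < cross_sum n E f ah ac (E k) t" for t
    using Dist_less_iff_cross_sum_pos[of n psih psic] n2 ah0 ac0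
    unfolding ah_def[abs_def] ac_def[abs_def] by simp
  then have "mpemba n E f psih psic \<longleftrightarrow> ah k / ah 0 < ac k / ac 0"
    using eventually_cross_sum_pos_iff[OF E0 Emono fmono f0 f1 k(1,2) ah0 ac0 same_below k(3)]
    by (simp add: mpemba_iff_eventually)
  then show ?thesis
    using ex unfolding pop_h pop_c k_def[symmetric] by simp
qed

end
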